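(* Let $d\ge 1$ and $N_1,\ldots,N_d\ge 1$ be integers. For each $j\in\{1,\ldots,d\}$ let $p_j,q_j:\{0,1,\ldots,N_j\}\to[0,1]$ satisfy $p_j(0)=q_j(0)=p_j(N_j)=q_j(N_j)=0$, $p_j(i)>0$ and $q_j(i)>0$ for $1\le i\le N_j-1$, and assume $\sum_{k=1}^d\big(p_k(i_k)+q_k(i_k)\big)\le 1$ for every $(i_1,\ldots,i_d)$ with $1\le i_k\le N_k$. Let $Z'$ be the Markov chain on $\mathbb E'=\{(i_1,\ldots,i_d):1\le i_j\le N_j,\ 1\le j\le d\}\cup\{-\infty\}$ with transition probabilities, for $(i_1,\ldots,i_d)\ne-\infty$: $P((i_1,\ldots,i_d),(i_1,\ldots,i_d)+\mathbf s_j)=p_j(i_j)$; $P((i_1,\ldots,i_d),(i_1,\ldots,i_d)-\mathbf s_j)=q_j(i_j)$ whenever $i_j\ge 2$; $P((i_1,\ldots,i_d),-\infty)=\sum_{j:\,i_j=1}q_j(1)$; $P((i_1,\ldots,i_d),(i_1,\ldots,i_d))=1-\sum_{k=1}^d\big(p_k(i_k)+q_k(i_k)\big)$; all other transitions from $(i_1,\ldots,i_d)$ have probability $0$; and $P(-\infty,-\infty)=1$. Here $\mathbf s_j$ is the $j$-th unit vector. (Then $(N_1,\ldots,N_d)$ and $-\infty$ are absorbing.) For $\tau_{\mathbf e}=\inf\{n\ge 0: Z'_n=\mathbf e\}$, define $\rho((i_1,\ldots,i_d))=P\big(\tau_{(N_1,\ldots,N_d)}<\tau_{-\infty}\mid Z'_0=(i_1,\ldots,i_d)\big)$.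 Then for every $(i_1,\ldots,i_d)$ with $1\le i_j\le N_j$, $$\rho((i_1,\ldots,i_d))=\frac{\prod_{j=1}^d\left(\sum_{n_j=1}^{i_j}\prod_{r=1}^{n_j-1}\frac{q_j(r)}{p_j(r)}\right)}{\prod_{j=1}^d\left(\sum_{n_j=1}^{N_j}\prod_{r=1}^{n_j-1}\frac{q_j(r)}{p_j(r)}\right)},$$ with empty products equal to $1$.
   Context: Interpretation: one player plays against $d$ others; $i_j$ is the player's current fortune against player $j$, $N_j$ the total money in that pair; reaching $i_j=0$ for some $j$ means losing (state $-\infty$), reaching $(N_1,\ldots,N_d)$ means winning. *)

theory Defs
  imports Complex_Main
begin

text \<open>States of the chain Z': Some x with x a list of length d (coordinate j is
  index j-1 of the paper), or None standing for the state -infinity.\<close>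

type_synonym state = "nat list option"

definition grid :: "nat \<Rightarrow> (nat \<Rightarrow> nat) \<Rightarrow> nat list set" where
  "grid d N = {x. length x = d \<and> (\<forall>j<d. 1 \<le> x ! j \<and> x ! j \<le> N j)}"

definition states :: "nat \<Rightarrow> (nat \<Rightarrow> nat) \<Rightarrow> state set" where
  "states d N = insert None (Some ` grid d N)"

fun trans :: "nat \<Rightarrow> (nat \<Rightarrow> nat \<Rightarrow> real) \<Rightarrow> (nat \<Rightarrow> nat \<Rightarrow> real)
              \<Rightarrow> state \<Rightarrow> state \<Rightarrow> real" where
  "trans d p q None None = 1"
| "trans d p q None (Some y) = 0"
| "trans d p q (Some x) None = (\<Sum>j\<in>{j. j < d \<and> x ! j = 1}. q j 1)"
| "trans d p q (Some x) (Some y) =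
     (if y = x then 1 - (\<Sum>k<d. p k (x ! k) + q k (x ! k)) else 0)
     + (\<Sum>j<d. (if y = x[j := x ! j + 1] then p j (x ! j) else 0)
              + (if 2 \<le> x ! j \<and> y = x[j := x ! j - 1] then q j (x ! j) else 0))"

text \<open>first_hit d N p q n s = P(tau_T = n and tau_{-inf} > n | Z'_0 = s), where
  T = (N_1,...,N_d): probability that the chain started in s visits T for the first
  time at step n without having visited -infinity before (first-passage decomposition
  by the Markov property).\<close>
fun first_hit :: "nat \<Rightarrow> (nat \<Rightarrow> nat) \<Rightarrow> (nat \<Rightarrow> nat \<Rightarrow> real) \<Rightarrow> (nat \<Rightarrow> nat \<Rightarrow> real)
                  \<Rightarrow> nat \<Rightarrow> state \<Rightarrow> real" where
  "first_hit d N p q 0 s = (if s = Some (map N [0..<d]) then 1 else 0)"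
| "first_hit d N p q (Suc n) s =
     (if s = Some (map N [0..<d]) \<or> s = None then 0
      else (\<Sum>t\<in>states d N. trans d p q s t * first_hit d N p q n t))"

text \<open>rho(s) = P(tau_T < tau_{-inf} | Z'_0 = s) = sum over n of P(tau_T = n < tau_{-inf}).\<close>
definition rho :: "nat \<Rightarrow> (nat \<Rightarrow> nat) \<Rightarrow> (nat \<Rightarrow> nat \<Rightarrow> real) \<Rightarrow> (nat \<Rightarrow> nat \<Rightarrow> real)
                   \<Rightarrow> state \<Rightarrow> real" where
  "rho d N p q s = (\<Sum>n. first_hit d N p q n s)"

end

theory Submission
  imports Defs
begin

(* Writing a_j for the one-dimensional gambler's-ruin scale function
   a_j(i) = sum_{n=1..i} prod_{r<n} q_j(r)/p_j(r), the claimed formula is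
   h(x) = prod_j a_j(x_j) / prod_j a_j(N_j), with h(-infinity) = 0.  Each factor satisfies
   the balance equation (p+q) a(i) = p a(i+1) + q a(i-1), and a(0) = 0 accounts for the exit
   to -infinity, so h is harmonic for the chain at every grid point.  The winning probability
   rho, the sum of the first-passage series, is harmonic as well by the one-step recursion of
   that series, and both functions are 0 at -infinity and 1 at the target.  From every other
   state the chain reaches -infinity with positive probability, by lowering a coordinate that
   is below its maximum down to 1 and then exiting, so by the maximum principle for the finite
   chain the two harmonic functions coincide. *)

section \<open>Maximum principle for finite absorbing chains\<close>

lemma weighted_sum_eq_max_imp_eq:
  fixes w f :: "'a \<Rightarrow> real"
  assumes "finite S" and "\<And>t. t \<in> S \<Longrightarrow> 0 \<le> w t" and "(\<Sum>t\<in>S. w t) = 1"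
    and "\<And>t. t \<in> S \<Longrightarrow> f t \<le> M" and "(\<Sum>t\<in>S. w t * f t) = M"
    and "y \<in> S" and "0 < w y"
  shows "f y = M"
proof -
  have "(\<Sum>t\<in>S. w t * (M - f t)) = M * (\<Sum>t\<in>S. w t) - (\<Sum>t\<in>S. w t * f t)"
    by (simp add: algebra_simps sum_subtractf sum_distrib_left)
  also have "\<dots> = 0" using assms(3,5) by simp
  finally have "\<forall>t\<in>S. w t * (M - f t) = 0"
    using assms(1,2,4) by (subst sum_nonneg_eq_0_iff[symmetric]) auto
  then show ?thesis using assms(6,7) by fastforce
qed

locale absorbing_kernel =
  fixes S I :: "'a set" and P :: "'a \<Rightarrow> 'a \<Rightarrow> real"
  assumes finite_S: "finite S"
    and P_nonneg: "\<And>x y. x \<in> I \<Longrightarrow> y \<in> S \<Longrightarrow> 0 \<le> P x y"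
    and P_row_sum: "\<And>x. x \<in> I \<Longrightarrow> (\<Sum>y\<in>S. P x y) = 1"
    and reaches_boundary:
      "\<And>x. x \<in> I \<Longrightarrow> \<exists>y\<in>S - I. (x, y) \<in> {(x, y). x \<in> I \<and> y \<in> S \<and> 0 < P x y}\<^sup>*"
begin

lemma harmonic_max_principle:
  fixes u :: "'a \<Rightarrow> real"
  assumes harmonic: "\<And>x. x \<in> I \<Longrightarrow> u x = (\<Sum>y\<in>S. P x y * u y)"
    and boundary: "\<And>y. y \<in> S - I \<Longrightarrow> u y \<le> 0"
    and "s \<in> S"
  shows "u s \<le> 0"
proof (rule ccontr)
  define M where "M = Max (u ` S)"
  have le_M: "u y \<le> M" if "y \<in> S" for y
    unfolding M_def using finite_S that by simp
  assume "\<not> u s \<le> 0"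
  then have M_pos: "0 < M" using le_M[OF \<open>s \<in> S\<close>] by simp
  have "M \<in> u ` S" unfolding M_def using finite_S \<open>s \<in> S\<close> by (intro Max_in) auto
  then obtain x where x: "x \<in> S" "u x = M" by auto
  have reach_max: "u y = M" if "(x, y) \<in> {(x, y). x \<in> I \<and> y \<in> S \<and> 0 < P x y}\<^sup>*" for y
    using that
  proof (induction rule: rtrancl_induct)
    case (step y z)
    then show ?case
      using weighted_sum_eq_max_imp_eq[OF finite_S, of "P y" u M z]
        P_nonneg P_row_sum harmonic le_M by auto
  qed (use x in simp)
  have "x \<in> I" using boundary x M_pos by force
  then obtain y where "y \<in> S - I" "(x, y) \<in> {(x, y). x \<in> I \<and> y \<in> S \<and> 0 < P x y}\<^sup>*"
    using reaches_boundary by blast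
  then have "u y = M" "u y \<le> 0" using reach_max boundary by auto
  then show False using M_pos by simp
qed

lemma harmonic_unique:
  fixes u v :: "'a \<Rightarrow> real"
  assumes "\<And>x. x \<in> I \<Longrightarrow> u x = (\<Sum>y\<in>S. P x y * u y)"
    and "\<And>x. x \<in> I \<Longrightarrow> v x = (\<Sum>y\<in>S. P x y * v y)"
    and "\<And>y. y \<in> S - I \<Longrightarrow> u y = v y"
    and "s \<in> S"
  shows "u s = v s"
proof -
  have "u s - v s \<le> 0"
    by (rule harmonic_max_principle[of "\<lambda>s. u s - v s"])
      (use assms in \<open>simp_all add: sum_subtractf right_diff_distrib\<close>)
  moreover have "v s - u s \<le> 0"
    by (rule harmonic_max_principle[of "\<lambda>s. v s - u s"])
      (use assms in \<open>simp_all add: sum_subtractf right_diff_distrib\<close>)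
  ultimately show ?thesis by simp
qed

end

section \<open>The scale function of a birth-death chain\<close>

definition scale :: "(nat \<Rightarrow> real) \<Rightarrow> (nat \<Rightarrow> real) \<Rightarrow> nat \<Rightarrow> real" where
  "scale p q i = (\<Sum>n=1..i. \<Prod>r=1..<n. q r / p r)"

lemma scale_0 [simp]: "scale p q 0 = 0"
  by (simp add: scale_def)

lemma scale_Suc: "scale p q (Suc i) = scale p q i + (\<Prod>r=1..i. q r / p r)"
  by (simp add: scale_def atLeastLessThanSuc_atLeastAtMost)

lemma scale_ge_1:
  assumes "1 \<le> i" and "\<And>r. 1 \<le> r \<Longrightarrow> r < i \<Longrightarrow> 0 \<le> q r / p r"
  shows "1 \<le> scale p q i"
  using assms
proof (induction i)
  case (Suc i)
  have "0 \<le> (\<Prod>r=1..i. q r / p r)" using Suc.prems(2) by (intro prod_nonneg) auto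
  with Suc show ?case by (cases "i = 0") (auto simp: scale_Suc)
qed simp

lemma scale_balance:
  assumes "1 \<le> i" and "p i \<noteq> 0"
  shows "(p i + q i) * scale p q i = p i * scale p q (Suc i) + q i * scale p q (i - 1)"
proof -
  obtain k where i: "i = Suc k" using assms(1) by (cases i) auto
  have "p i * (\<Prod>r=1..i. q r / p r) = q i * (\<Prod>r=1..k. q r / p r)"
    using assms(2) by (simp add: i prod.nat_ivl_Suc')
  then show ?thesis by (simp add: i scale_Suc algebra_simps)
qed

lemma finite_grid: "finite (grid d N)"
proof (rule finite_subset)
  have "x ! j \<le> (\<Sum>k<d. N k)" if "x \<in> grid d N" "j < d" for x j
    using that member_le_sum[of j "{..<d}" N] by (auto simp: grid_def)
  then show "grid d N \<subseteq> {xs. set xs \<subseteq> {0..(\<Sum>k<d. N k)} \<and> length xs = d}"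
    by (auto simp: grid_def in_set_conv_nth)
qed (simp add: finite_lists_length_eq)

lemma Suc_update_in_grid:
  "x \<in> grid d N \<Longrightarrow> j < d \<Longrightarrow> x[j := x ! j + 1] \<in> grid d N \<longleftrightarrow> x ! j < N j"
  by (auto simp: grid_def nth_list_update)

lemma pred_update_in_grid:
  "x \<in> grid d N \<Longrightarrow> j < d \<Longrightarrow> 2 \<le> x ! j \<Longrightarrow> x[j := x ! j - 1] \<in> grid d N"
  by (auto simp: grid_def nth_list_update)

lemma sum_trans_mult:
  fixes f :: "state \<Rightarrow> real"
  assumes x: "x \<in> grid d N"
  shows "(\<Sum>t\<in>states d N. trans d p q (Some x) t * f t) =
      trans d p q (Some x) None * f None
      + (1 - (\<Sum>k<d. p k (x ! k) + q k (x ! k))) * f (Some x)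
      + (\<Sum>j<d. (if x ! j < N j then p j (x ! j) * f (Some (x[j := x ! j + 1])) else 0)
             + (if 2 \<le> x ! j then q j (x ! j) * f (Some (x[j := x ! j - 1])) else 0))"
proof -
  let ?R = "\<Sum>k<d. p k (x ! k) + q k (x ! k)"
  have stay_sum: "(\<Sum>y\<in>grid d N. if y = x then g y else 0) = g x" for g :: "nat list \<Rightarrow> real"
    using finite_grid x by (simp add: sum.delta')
  have up_sum: "(\<Sum>y\<in>grid d N. if y = x[j := x ! j + 1] then g y else 0) =
      (if x ! j < N j then g (x[j := x ! j + 1]) else 0)"
    if "j \<in> {..<d}" for j and g :: "nat list \<Rightarrow> real"
    using finite_grid Suc_update_in_grid[OF x] that by (simp add: sum.delta')
  have down_sum: "(\<Sum>y\<in>grid d N. if 2 \<le> x ! j \<and> y = x[j := x ! j - 1] then g y else 0) =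
      (if 2 \<le> x ! j then g (x[j := x ! j - 1]) else 0)"
    if "j \<in> {..<d}" for j and g :: "nat list \<Rightarrow> real"
    using finite_grid pred_update_in_grid[OF x] that
    by (cases "2 \<le> x ! j") (simp_all add: sum.delta')
  have if_times: "(if c then a else 0) * b = (if c then a * b else 0)" for c and a b :: real
    by simp
  have "(\<Sum>t\<in>states d N. trans d p q (Some x) t * f t) = trans d p q (Some x) None * f None
      + (\<Sum>y\<in>grid d N. trans d p q (Some x) (Some y) * f (Some y))"
    using finite_grid by (simp add: states_def sum.reindex)
  also have "(\<Sum>y\<in>grid d N. trans d p q (Some x) (Some y) * f (Some y)) =
      (\<Sum>y\<in>grid d N. if y = x then (1 - ?R) * f (Some y) else 0)
      + (\<Sum>j<d. (\<Sum>y\<in>grid d N. if y = x[j := x ! j + 1] then p j (x ! j) * f (Some y) else 0)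
        + (\<Sum>y\<in>grid d N. if 2 \<le> x ! j \<and> y = x[j := x ! j - 1]
             then q j (x ! j) * f (Some y) else 0))"
    by (simp only: trans.simps distrib_right sum_distrib_right if_times sum.distrib
        sum.swap[of _ "grid d N"])
  finally show ?thesis
    by (simp only: stay_sum up_sum down_sum add.assoc cong: sum.cong)
qed

lemma prod_nth_list_update:
  assumes "length x = d" and "j < d"
  shows "(\<Prod>k<d. f k (x[j := v] ! k)) = f j v * (\<Prod>k\<in>{..<d} - {j}. f k (x ! k))"
proof -
  have "(\<Prod>k<d. f k (x[j := v] ! k)) = f j v * (\<Prod>k\<in>{..<d} - {j}. f k (x[j := v] ! k))"
    using assms by (subst prod.remove[of _ j]) auto
  also have "(\<Prod>k\<in>{..<d} - {j}. f k (x[j := v] ! k)) = (\<Prod>k\<in>{..<d} - {j}. f k (x ! k))"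
    by (intro prod.cong) auto
  finally show ?thesis .
qed

lemma sum_first_hit_Suc:
  "(\<Sum>k<Suc n. first_hit d N p q k s) =
     (if s = Some (map N [0..<d]) then 1 else if s = None then 0
      else (\<Sum>t\<in>states d N. trans d p q s t * (\<Sum>k<n. first_hit d N p q k t)))"
proof -
  have "(\<Sum>k<n. \<Sum>t\<in>states d N. trans d p q s t * first_hit d N p q k t) =
      (\<Sum>t\<in>states d N. trans d p q s t * (\<Sum>k<n. first_hit d N p q k t))"
    by (simp add: sum_distrib_left sum.swap[of _ "{..<n}"])
  then show ?thesis unfolding sum.lessThan_Suc_shift by (cases s) auto
qed

lemma rho_target: "rho d N p q (Some (map N [0..<d])) = 1"
proof -
  have "first_hit d N p q n (Some (map N [0..<d])) = (if n = 0 then 1 else 0)" for n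
    by (cases n) simp_all
  moreover have "(\<lambda>n::nat. if n = 0 then 1 else 0 :: real) sums 1"
    using sums_single[of 0 "\<lambda>_. 1 :: real"] by simp
  ultimately show ?thesis by (simp add: rho_def sums_iff)
qed

lemma rho_None: "rho d N p q None = 0"
proof -
  have "first_hit d N p q n None = 0" for n
    by (cases n) simp_all
  then show ?thesis by (simp add: rho_def)
qed

locale product_ruin =
  fixes d :: nat and N :: "nat \<Rightarrow> nat" and p q :: "nat \<Rightarrow> nat \<Rightarrow> real"
  assumes N_pos: "\<And>j. j < d \<Longrightarrow> 1 \<le> N j"
    and p_nonneg: "\<And>j i. j < d \<Longrightarrow> i \<le> N j \<Longrightarrow> 0 \<le> p j i"
    and q_nonneg: "\<And>j i. j < d \<Longrightarrow> i \<le> N j \<Longrightarrow> 0 \<le> q j i"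
    and p_top: "\<And>j. j < d \<Longrightarrow> p j (N j) = 0"
    and q_top: "\<And>j. j < d \<Longrightarrow> q j (N j) = 0"
    and p_pos: "\<And>j i. j < d \<Longrightarrow> 1 \<le> i \<Longrightarrow> i < N j \<Longrightarrow> 0 < p j i"
    and q_pos: "\<And>j i. j < d \<Longrightarrow> 1 \<le> i \<Longrightarrow> i < N j \<Longrightarrow> 0 < q j i"
    and rates_le_1: "\<And>x. x \<in> grid d N \<Longrightarrow> (\<Sum>k<d. p k (x ! k) + q k (x ! k)) \<le> 1"
begin

abbreviation target :: state where
  "target \<equiv> Some (map N [0..<d])"

definition transient :: "state set" where
  "transient = states d N - {None, target}"

lemma trans_nonneg:
  assumes "s \<in> states d N"
  shows "0 \<le> trans d p q s t"
proof (cases s)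
  case None
  then show ?thesis by (cases t) simp_all
next
  case (Some x)
  then have x: "length x = d" "\<And>j. j < d \<Longrightarrow> 1 \<le> x ! j \<and> x ! j \<le> N j"
    using assms by (auto simp: states_def grid_def)
  have "0 \<le> 1 - (\<Sum>k<d. p k (x ! k) + q k (x ! k))"
    using rates_le_1 assms Some by (auto simp: states_def)
  with Some x show ?thesis
    using N_pos p_nonneg q_nonneg by (cases t) (auto intro!: sum_nonneg add_nonneg_nonneg)
qed

lemma trans_row_sum:
  assumes x: "x \<in> grid d N"
  shows "(\<Sum>t\<in>states d N. trans d p q (Some x) t) = 1"
proof -
  have x_bounds: "1 \<le> x ! j" "x ! j \<le> N j" if "j < d" for j
    using x that by (auto simp: grid_def)
  have "(\<Sum>j<d. if x ! j = 1 then q j (x ! j) else 0)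
      = (\<Sum>j\<in>{j\<in>{..<d}. x ! j = 1}. q j (x ! j))"
    by (subst sum.inter_filter) auto
  also have "\<dots> = trans d p q (Some x) None"
    unfolding trans.simps by (intro sum.cong) auto
  finally have exit_prob:
    "trans d p q (Some x) None = (\<Sum>j<d. if x ! j = 1 then q j (x ! j) else 0)" ..
  have coordinates: "(\<Sum>j<d. (if x ! j = 1 then q j (x ! j) else 0)
      + ((if x ! j < N j then p j (x ! j) else 0) + (if 2 \<le> x ! j then q j (x ! j) else 0)))
      = (\<Sum>j<d. p j (x ! j) + q j (x ! j))"
  proof (rule sum.cong)
    fix j assume "j \<in> {..<d}"
    then show "(if x ! j = 1 then q j (x ! j) else 0)
        + ((if x ! j < N j then p j (x ! j) else 0) + (if 2 \<le> x ! j then q j (x ! j) else 0))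
        = p j (x ! j) + q j (x ! j)"
      using x_bounds[of j] p_top[of j] by (cases "x ! j = N j") auto
  qed simp
  have "(\<Sum>t\<in>states d N. trans d p q (Some x) t) = (1 - (\<Sum>k<d. p k (x ! k) + q k (x ! k)))
      + (\<Sum>j<d. (if x ! j = 1 then q j (x ! j) else 0)
        + ((if x ! j < N j then p j (x ! j) else 0) + (if 2 \<le> x ! j then q j (x ! j) else 0)))"
    using sum_trans_mult[OF x, where f = "\<lambda>_. 1" and p = p and q = q]
    unfolding exit_prob mult_1_right by (simp add: sum.distrib)
  also have "\<dots> = 1"
    unfolding coordinates by simp
  finally show ?thesis .
qed

lemma trans_pos_pred:
  assumes x: "x \<in> grid d N" and j: "j < d" and "2 \<le> x ! j" and "x ! j < N j"
  shows "0 < trans d p q (Some x) (Some (x[j := x ! j - 1]))"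
proof -
  define y where "y = x[j := x ! j - 1]"
  define move where "move k = (if y = x[k := x ! k + 1] then p k (x ! k) else 0)
      + (if 2 \<le> x ! k \<and> y = x[k := x ! k - 1] then q k (x ! k) else 0)" for k
  have x_bounds: "length x = d" "\<And>k. k < d \<Longrightarrow> x ! k \<le> N k"
    using x by (auto simp: grid_def)
  have "y \<noteq> x"
    using assms x_bounds by (auto simp: y_def dest: arg_cong[where f = "\<lambda>z. z ! j"])
  then have "trans d p q (Some x) (Some y) = sum move {..<d}"
    by (simp add: move_def)
  moreover have "0 < q j (x ! j)"
    using q_pos assms by simp
  moreover have "q j (x ! j) \<le> move j"
    using assms x_bounds p_nonneg by (simp add: move_def y_def)
  moreover have "move j \<le> sum move {..<d}"
    using j x_bounds p_nonneg q_nonneg by (intro member_le_sum) (auto simp: move_def)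
  ultimately show ?thesis by (simp add: y_def)
qed

lemma trans_pos_None:
  assumes "x \<in> grid d N" and "j < d" and "x ! j = 1" and "1 < N j"
  shows "0 < trans d p q (Some x) None"
proof -
  have "0 < q j 1"
    using q_pos assms by simp
  also have "q j 1 \<le> (\<Sum>i\<in>{i. i < d \<and> x ! i = 1}. q i 1)"
    using assms N_pos q_nonneg by (intro member_le_sum) auto
  finally show ?thesis by simp
qed

lemma Some_in_transient:
  "x \<in> grid d N \<Longrightarrow> j < d \<Longrightarrow> x ! j < N j \<Longrightarrow> Some x \<in> transient"
  by (auto simp: transient_def states_def)

lemma transient_below_top:
  assumes "Some x \<in> transient"
  obtains j where "j < d" and "x ! j < N j"
proof -
  have x: "x \<in> grid d N" "x \<noteq> map N [0..<d]"
    using assms by (auto simp: transient_def states_def)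
  then have "\<exists>j<d. x ! j < N j"
    by (auto simp: grid_def not_less intro!: nth_equalityI) (meson leD le_antisym)
  with that show ?thesis by blast
qed

lemma transient_reaches_None:
  assumes "s \<in> transient"
  shows "(s, None) \<in> {(s, t). s \<in> transient \<and> t \<in> states d N \<and> 0 < trans d p q s t}\<^sup>*"
proof -
  let ?step = "{(s, t). s \<in> transient \<and> t \<in> states d N \<and> 0 < trans d p q s t}"
  obtain x where s: "s = Some x" and x: "x \<in> grid d N"
    using assms by (auto simp: transient_def states_def)
  obtain j where j: "j < d" "x ! j < N j"
    using transient_below_top assms s by blast
  have "(Some y, None) \<in> ?step\<^sup>*" if "y \<in> grid d N" "y ! j = k" "k < N j" for y k
    using that
  proof (induction k arbitrary: y)
    case 0
    then show ?case using j by (auto simp: grid_def)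
  next
    case (Suc k)
    have "Some y \<in> transient"
      using Suc.prems j by (intro Some_in_transient) auto
    show ?case
    proof (cases "k = 0")
      case True
      then have "(Some y, None) \<in> ?step"
        using Suc.prems j \<open>Some y \<in> transient\<close> trans_pos_None[of y j]
        by (auto simp: states_def)
      then show ?thesis by blast
    next
      case False
      let ?z = "y[j := y ! j - 1]"
      have z: "?z \<in> grid d N" "?z ! j = k"
        using Suc.prems j False pred_update_in_grid[of y d N j] by (auto simp: grid_def)
      have "(Some y, Some ?z) \<in> ?step"
        using Suc.prems j False \<open>Some y \<in> transient\<close> z trans_pos_pred[of y j]
        by (auto simp: states_def)
      moreover have "(Some ?z, None) \<in> ?step\<^sup>*"
        using Suc.IH z Suc.prems by simp
      ultimately show ?thesis by (rule converse_rtrancl_into_rtrancl)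
    qed
  qed
  then show ?thesis using x j s by blast
qed

sublocale absorbing_kernel "states d N" transient "trans d p q"
proof
  show "finite (states d N)"
    using finite_grid by (simp add: states_def)
  show "0 \<le> trans d p q s t" if "s \<in> transient" for s t
    using that trans_nonneg by (simp add: transient_def)
  show "(\<Sum>t\<in>states d N. trans d p q s t) = 1" if "s \<in> transient" for s
    using that trans_row_sum by (auto simp: transient_def states_def)
  show "\<exists>t\<in>states d N - transient.
      (s, t) \<in> {(s, t). s \<in> transient \<and> t \<in> states d N \<and> 0 < trans d p q s t}\<^sup>*"
    if "s \<in> transient" for s
    using that transient_reaches_None by (auto simp: transient_def states_def)
qed

section \<open>Harmonicity of the closed form and of the winning probability\<close>

lemma scale_balance_grid:
  assumes "j < d" and "1 \<le> i" and "i \<le> N j"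
  shows "(p j i + q j i) * scale (p j) (q j) i
    = p j i * scale (p j) (q j) (Suc i) + q j i * scale (p j) (q j) (i - 1)"
proof (cases "i = N j")
  case True
  then show ?thesis using assms p_top q_top by simp
next
  case False
  then show ?thesis using assms p_pos[of j i] by (intro scale_balance) auto
qed

definition rho_formula :: "state \<Rightarrow> real" where
  "rho_formula s = (case s of None \<Rightarrow> 0 | Some x \<Rightarrow>
     (\<Prod>j<d. scale (p j) (q j) (x ! j)) / (\<Prod>j<d. scale (p j) (q j) (N j)))"

lemma rho_formula_target: "rho_formula target = 1"
proof -
  have "1 \<le> scale (p j) (q j) (N j)" if "j < d" for j
    using that N_pos p_nonneg q_nonneg by (intro scale_ge_1) auto
  then have "scale (p j) (q j) (N j) \<noteq> 0" if "j < d" for j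
    using that by fastforce
  then show ?thesis by (simp add: rho_formula_def)
qed

lemma rho_formula_harmonic:
  assumes x: "x \<in> grid d N"
  shows "rho_formula (Some x) = (\<Sum>t\<in>states d N. trans d p q (Some x) t * rho_formula t)"
proof -
  let ?a = "\<lambda>j. scale (p j) (q j)"
  let ?D = "\<Prod>j<d. ?a j (N j)"
  let ?R = "\<Sum>k<d. p k (x ! k) + q k (x ! k)"
  have x_bounds: "length x = d" "\<And>j. j < d \<Longrightarrow> 1 \<le> x ! j \<and> x ! j \<le> N j"
    using x by (auto simp: grid_def)
  have coordinate:
    "(if x ! j < N j then p j (x ! j) * rho_formula (Some (x[j := x ! j + 1])) else 0)
      + (if 2 \<le> x ! j then q j (x ! j) * rho_formula (Some (x[j := x ! j - 1])) else 0)
      = (p j (x ! j) + q j (x ! j)) * rho_formula (Some x)" if j: "j < d" for j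
  proof -
    define rest where "rest = (\<Prod>k\<in>{..<d} - {j}. ?a k (x ! k))"
    have update: "rho_formula (Some (x[j := v])) = ?a j v * rest / ?D" for v
      using prod_nth_list_update[OF x_bounds(1) j, of ?a v]
      by (simp add: rho_formula_def rest_def)
    have up: "(if x ! j < N j then p j (x ! j) * rho_formula (Some (x[j := x ! j + 1])) else 0)
        = p j (x ! j) * ?a j (Suc (x ! j)) * rest / ?D"
      using update x_bounds(2)[OF j] p_top[OF j] by (cases "x ! j < N j") auto
    have down: "(if 2 \<le> x ! j then q j (x ! j) * rho_formula (Some (x[j := x ! j - 1])) else 0)
        = q j (x ! j) * ?a j (x ! j - 1) * rest / ?D"
      using update x_bounds(2)[OF j] by (cases "2 \<le> x ! j") (auto simp: le_Suc_eq)
    have "(p j (x ! j) + q j (x ! j)) * rho_formula (Some x)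
        = (p j (x ! j) + q j (x ! j)) * ?a j (x ! j) * rest / ?D"
      using update[of "x ! j"] by simp
    moreover have "(p j (x ! j) + q j (x ! j)) * ?a j (x ! j)
        = p j (x ! j) * ?a j (Suc (x ! j)) + q j (x ! j) * ?a j (x ! j - 1)"
      using j x_bounds(2)[OF j] by (intro scale_balance_grid) auto
    ultimately show ?thesis
      unfolding up down by (simp add: add_divide_distrib[symmetric] distrib_right[symmetric])
  qed
  have "(\<Sum>t\<in>states d N. trans d p q (Some x) t * rho_formula t)
      = (1 - ?R) * rho_formula (Some x)
        + (\<Sum>j<d. (p j (x ! j) + q j (x ! j)) * rho_formula (Some x))"
    by (simp add: sum_trans_mult[OF x] coordinate rho_formula_def[of None])
  also have "\<dots> = (1 - ?R) * rho_formula (Some x) + ?R * rho_formula (Some x)"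
    by (simp only: sum_distrib_right)
  also have "\<dots> = rho_formula (Some x)"
    by (simp add: algebra_simps)
  finally show ?thesis ..
qed

lemma first_hit_nonneg: "s \<in> states d N \<Longrightarrow> 0 \<le> first_hit d N p q n s"
proof (induction n arbitrary: s)
  case (Suc n)
  then show ?case by (auto intro!: sum_nonneg mult_nonneg_nonneg trans_nonneg)
qed simp

lemma sum_first_hit_le_1: "s \<in> states d N \<Longrightarrow> (\<Sum>k<n. first_hit d N p q k s) \<le> 1"
proof (induction n arbitrary: s)
  case (Suc n)
  show ?case
  proof (cases "s \<in> transient")
    case True
    then obtain x where x: "s = Some x" "x \<in> grid d N"
      by (auto simp: transient_def states_def)
    have "(\<Sum>k<Suc n. first_hit d N p q k s)
        = (\<Sum>t\<in>states d N. trans d p q s t * (\<Sum>k<n. first_hit d N p q k t))"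
      using True unfolding sum_first_hit_Suc by (auto simp: transient_def)
    also have "\<dots> \<le> (\<Sum>t\<in>states d N. trans d p q s t)"
      using Suc.IH trans_nonneg Suc.prems first_hit_nonneg
      by (intro sum_mono mult_right_le_one_le) (auto intro: sum_nonneg)
    also have "\<dots> = 1"
      using trans_row_sum x by simp
    finally show ?thesis .
  next
    case False
    then show ?thesis using Suc.prems unfolding sum_first_hit_Suc by (auto simp: transient_def)
  qed
qed simp

lemma summable_first_hit: "s \<in> states d N \<Longrightarrow> summable (\<lambda>n. first_hit d N p q n s)"
  by (rule summableI_nonneg_bounded[where x = 1])
    (auto intro: first_hit_nonneg sum_first_hit_le_1)

lemma rho_harmonic:
  assumes s: "s \<in> transient"
  shows "rho d N p q s = (\<Sum>t\<in>states d N. trans d p q s t * rho d N p q t)"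
proof -
  have partial_sums: "(\<lambda>n. \<Sum>k<n. first_hit d N p q k t) \<longlonglongrightarrow> rho d N p q t"
    if "t \<in> states d N" for t
    unfolding rho_def using summable_first_hit[OF that] by (rule summable_LIMSEQ)
  have "(\<lambda>n. \<Sum>k<Suc n. first_hit d N p q k s) \<longlonglongrightarrow> rho d N p q s"
    using partial_sums s by (intro LIMSEQ_Suc) (simp add: transient_def)
  moreover have "(\<lambda>n. \<Sum>k<Suc n. first_hit d N p q k s)
      = (\<lambda>n. \<Sum>t\<in>states d N. trans d p q s t * (\<Sum>k<n. first_hit d N p q k t))"
    using s unfolding sum_first_hit_Suc by (auto simp: transient_def)
  moreover have "(\<lambda>n. \<Sum>t\<in>states d N. trans d p q s t * (\<Sum>k<n. first_hit d N p q k t))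
      \<longlonglongrightarrow> (\<Sum>t\<in>states d N. trans d p q s t * rho d N p q t)"
    by (intro tendsto_sum tendsto_mult_left partial_sums)
  ultimately show ?thesis using LIMSEQ_unique by metis
qed

lemma rho_eq_rho_formula:
  assumes "x \<in> grid d N"
  shows "rho d N p q (Some x) = rho_formula (Some x)"
proof (rule harmonic_unique)
  show "rho d N p q s = (\<Sum>t\<in>states d N. trans d p q s t * rho d N p q t)" if "s \<in> transient" for s
    using that by (rule rho_harmonic)
  show "rho_formula s = (\<Sum>t\<in>states d N. trans d p q s t * rho_formula t)" if "s \<in> transient" for s
    using that rho_formula_harmonic by (auto simp: transient_def states_def)
  show "rho d N p q s = rho_formula s" if "s \<in> states d N - transient" for s
    using that by (auto simp: transient_def states_def rho_None rho_target rho_formula_target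
        rho_formula_def[of None])
  show "Some x \<in> states d N"
    using assms by (simp add: states_def)
qed

end

theorem theorem2p1:
  fixes d :: nat and N :: "nat \<Rightarrow> nat" and p q :: "nat \<Rightarrow> nat \<Rightarrow> real"
  assumes "d \<ge> 1"
    and "\<forall>j<d. N j \<ge> 1"
    and "\<forall>j<d. \<forall>i\<le>N j. 0 \<le> p j i \<and> p j i \<le> 1 \<and> 0 \<le> q j i \<and> q j i \<le> 1"
    and "\<forall>j<d. p j 0 = 0 \<and> q j 0 = 0 \<and> p j (N j) = 0 \<and> q j (N j) = 0"
    and "\<forall>j<d. \<forall>i. 1 \<le> i \<and> i \<le> N j - 1 \<longrightarrow> p j i > 0 \<and> q j i > 0"
    and "\<forall>x\<in>grid d N. (\<Sum>k<d. p k (x ! k) + q k (x ! k)) \<le> 1"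
    and "x \<in> grid d N"
  shows "rho d N p q (Some x) =
    (\<Prod>j<d. \<Sum>n=1..x ! j. \<Prod>r=1..<n. q j r / p j r) /
    (\<Prod>j<d. \<Sum>n=1..N j. \<Prod>r=1..<n. q j r / p j r)"
proof -
  interpret product_ruin d N p q
    by unfold_locales (use assms(2-6) in auto)
  show ?thesis
    using rho_eq_rho_formula[OF assms(7)] by (simp add: rho_formula_def scale_def)
qed

end
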